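(* Let $\Omega\subset\mathbb{R}^{n+m}$ be a bounded open set, $s\in(0,1)$ and $p\in(1,\infty)$. There is a constant $C>0$ such that \[ \|u\|_{L^p(\Omega)}\le C[u]_{\mathcal W^{s,p}(\mathbb{R}^{n+m})}\qquad\forall u\in\widetilde{\mathcal W}^{s,p}(\Omega). \]
   Context: Points of $\mathbb{R}^{n+m}$ are $(x,y)$, $x\in\mathbb{R}^n$, $y\in\mathbb{R}^m$. \[ [u]^p_{\mathcal W^{s,p}(\mathbb{R}^{n+m})}=\int_{\mathbb{R}^{n+m}}\int_{\mathbb{R}^n}\frac{|u(x,y)-u(z,y)|^p}{|x-z|^{n+sp}}\,dz\,dx\,dy+\int_{\mathbb{R}^{n+m}}\int_{\mathbb{R}^m}\frac{|u(x,y)-u(x,w)|^p}{|y-w|^{m+sp}}\,dw\,dx\,dy, \] and $\widetilde{\mathcal W}^{s,p}(\Omega)$ is the set of functions $u\in L^p(\mathbb{R}^{n+m})$ with $[u]_{\mathcal W^{s,p}(\mathbb{R}^{n+m})}<\infty$ and $u\equiv0$ in $\mathbb{R}^{n+m}\setminus\Omega$. *)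

theory Defs
  imports "HOL-Analysis.Analysis"
begin

text \<open>Points of R^(n+m) are pairs (x,y) with x in 'a (dimension n = DIM('a)) and
  y in 'b (dimension m = DIM('b)). Lebesgue measure on the product is lborel.\<close>

definition aniso_seminorm_p ::
  "real \<Rightarrow> real \<Rightarrow> ('a::euclidean_space \<times> 'b::euclidean_space \<Rightarrow> real) \<Rightarrow> ennreal" where
  "aniso_seminorm_p s p u =
     (\<integral>\<^sup>+ w. (\<integral>\<^sup>+ z. ennreal (\<bar>u (fst w, snd w) - u (z, snd w)\<bar> powr p
                 / norm (fst w - z) powr (real DIM('a) + s * p)) \<partial>lborel) \<partial>lborel)
   + (\<integral>\<^sup>+ w. (\<integral>\<^sup>+ v. ennreal (\<bar>u (fst w, snd w) - u (fst w, v)\<bar> powr p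
                 / norm (snd w - v) powr (real DIM('b) + s * p)) \<partial>lborel) \<partial>lborel)"

definition aniso_seminorm ::
  "real \<Rightarrow> real \<Rightarrow> ('a::euclidean_space \<times> 'b::euclidean_space \<Rightarrow> real) \<Rightarrow> real" where
  "aniso_seminorm s p u = enn2real (aniso_seminorm_p s p u) powr (1 / p)"

definition Lp_norm_on :: "real \<Rightarrow> ('a::euclidean_space \<Rightarrow> real) \<Rightarrow> 'a set \<Rightarrow> real" where
  "Lp_norm_on p u A = enn2real (\<integral>\<^sup>+ w. ennreal (\<bar>u w\<bar> powr p) * indicator A w \<partial>lborel) powr (1 / p)"

definition aniso_W_tilde ::
  "real \<Rightarrow> real \<Rightarrow> ('a::euclidean_space \<times> 'b::euclidean_space) set
     \<Rightarrow> ('a \<times> 'b \<Rightarrow> real) set" where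
  "aniso_W_tilde s p \<Omega> = {u. u \<in> borel_measurable lborel
       \<and> (\<integral>\<^sup>+ w. ennreal (\<bar>u w\<bar> powr p) \<partial>lborel) < \<infinity>
       \<and> aniso_seminorm_p s p u < \<infinity>
       \<and> (\<forall>w. w \<notin> \<Omega> \<longrightarrow> u w = 0)}"

end

theory Submission
  imports Defs
begin

text \<open>If \<open>u\<close> vanishes outside the ball of radius \<open>R\<close>, then for every point \<open>(x, y)\<close> the
  ball of radius \<open>R\<close> centred at \<open>x + 3R e\<close> (with \<open>|e| = 1\<close>) lies in the zero set of
  \<open>u(-, y)\<close>, at distance between \<open>2R\<close> and \<open>4R\<close> from \<open>x\<close>. There the integrand of the first
  part of the seminorm is \<open>|u(x,y)|^p / |x - z|^(n+sp) \<ge> |u(x,y)|^p / (4R)^(n+sp)\<close>, so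
  integrating over \<open>z\<close> and then over \<open>(x, y)\<close> gives \<open>\<kappa> \<parallel>u\<parallel>_p^p \<le> [u]^p\<close> with
  \<open>\<kappa> = |B_R| / (4R)^(n+sp)\<close>.\<close>

definition far_ball_mass :: "nat \<Rightarrow> real \<Rightarrow> real \<Rightarrow> real" where
  "far_ball_mass n R d = unit_ball_vol (real n) * R ^ n / (4 * R) powr d"

lemma far_ball_mass_pos: "R > 0 \<Longrightarrow> far_ball_mass n R d > 0"
  unfolding far_ball_mass_def by simp

lemma ball_subset_annulus:
  fixes x e :: "'a::real_normed_vector"
  assumes "norm e = 1"
  shows "ball (x + (3 * R) *\<^sub>R e) R \<subseteq> {z. 2 * R < dist x z \<and> dist x z \<le> 4 * R}"
proof
  fix z assume "z \<in> ball (x + (3 * R) *\<^sub>R e) R"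
  then have near: "norm (z - (x + (3 * R) *\<^sub>R e)) < R"
    by (simp add: dist_norm norm_minus_commute)
  have "dist x z = norm ((3 * R) *\<^sub>R e + (z - (x + (3 * R) *\<^sub>R e)))"
    by (simp add: dist_norm norm_minus_commute algebra_simps)
  then show "z \<in> {z. 2 * R < dist x z \<and> dist x z \<le> 4 * R}"
    using norm_triangle_ineq[of "(3 * R) *\<^sub>R e" "z - (x + (3 * R) *\<^sub>R e)"]
      norm_diff_ineq[of "(3 * R) *\<^sub>R e" "z - (x + (3 * R) *\<^sub>R e)"] near assms
    by auto
qed

lemma powr_le_nn_integral_fractional_difference:
  fixes f :: "'a::euclidean_space \<Rightarrow> real"
  assumes R: "R > 0" and d: "d \<ge> 0"
    and vanish: "\<And>z. R < norm z \<Longrightarrow> f z = 0"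
  shows "ennreal (far_ball_mass DIM('a) R d) * ennreal (\<bar>f x\<bar> powr p)
    \<le> (\<integral>\<^sup>+ z. ennreal (\<bar>f x - f z\<bar> powr p / norm (x - z) powr d) \<partial>lborel)"
proof (cases "f x = 0")
  case True
  then show ?thesis by simp
next
  case False
  then have x: "norm x \<le> R" using vanish by force
  obtain e :: 'a where "e \<in> Basis" using nonempty_Basis by blast
  define B where "B = ball (x + (3 * R) *\<^sub>R e) R"
  have B: "2 * R < dist x z \<and> dist x z \<le> 4 * R" if "z \<in> B" for z
    using ball_subset_annulus[of e x R] \<open>e \<in> Basis\<close> that unfolding B_def by auto
  define K where "K = \<bar>f x\<bar> powr p / (4 * R) powr d"
  have K_le: "ennreal K * indicator B z
      \<le> ennreal (\<bar>f x - f z\<bar> powr p / norm (x - z) powr d)" for z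
  proof (cases "z \<in> B")
    case True
    then have far: "2 * R < norm (x - z)" and close: "norm (x - z) \<le> 4 * R"
      using B by (auto simp: dist_norm)
    have "f z = 0"
      using far x norm_triangle_ineq4[of x z] by (intro vanish) linarith
    moreover have "norm (x - z) powr d \<le> (4 * R) powr d"
      using close d by (intro powr_mono2) auto
    then have "K \<le> \<bar>f x\<bar> powr p / norm (x - z) powr d"
      unfolding K_def using far R by (intro divide_left_mono) (auto intro!: mult_pos_pos)
    ultimately show ?thesis using True by (simp add: ennreal_leI)
  qed simp
  have "ennreal (far_ball_mass DIM('a) R d) * ennreal (\<bar>f x\<bar> powr p)
      = ennreal K * emeasure lborel B"
    using R unfolding far_ball_mass_def K_def B_def
    by (simp add: emeasure_ball ennreal_mult'[symmetric] ennreal_mult[symmetric] mult_ac)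
  also have "\<dots> = (\<integral>\<^sup>+ z. ennreal K * indicator B z \<partial>lborel)"
    unfolding B_def by (simp add: nn_integral_cmult_indicator)
  also have "\<dots> \<le> (\<integral>\<^sup>+ z. ennreal (\<bar>f x - f z\<bar> powr p / norm (x - z) powr d) \<partial>lborel)"
    by (intro nn_integral_mono K_le)
  finally show ?thesis .
qed

lemma far_ball_mass_mult_Lp_le_aniso_seminorm_p:
  fixes u :: "'a::euclidean_space \<times> 'b::euclidean_space \<Rightarrow> real" and s p :: real
  assumes R: "R > 0" and sp: "0 \<le> s * p"
    and u: "u \<in> borel_measurable lborel"
    and vanish: "\<And>w. R < norm w \<Longrightarrow> u w = 0"
  shows "ennreal (far_ball_mass DIM('a) R (real DIM('a) + s * p)) * (\<integral>\<^sup>+ w. ennreal (\<bar>u w\<bar> powr p) \<partial>lborel)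
    \<le> aniso_seminorm_p s p u"
proof -
  have slice_vanish: "u (z, y) = 0" if "R < norm z" for z :: 'a and y :: 'b
    using that norm_fst_le[of z y] by (intro vanish) linarith
  have "ennreal (far_ball_mass DIM('a) R (real DIM('a) + s * p)) * (\<integral>\<^sup>+ w. ennreal (\<bar>u w\<bar> powr p) \<partial>lborel)
      = (\<integral>\<^sup>+ w. ennreal (far_ball_mass DIM('a) R (real DIM('a) + s * p)) * ennreal (\<bar>u w\<bar> powr p) \<partial>lborel)"
    using u by (simp add: nn_integral_cmult)
  also have "\<dots> \<le> (\<integral>\<^sup>+ w. (\<integral>\<^sup>+ z. ennreal (\<bar>u (fst w, snd w) - u (z, snd w)\<bar> powr p
                 / norm (fst w - z) powr (real DIM('a) + s * p)) \<partial>lborel) \<partial>lborel)"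
  proof (intro nn_integral_mono)
    fix w :: "'a \<times> 'b"
    show "ennreal (far_ball_mass DIM('a) R (real DIM('a) + s * p)) * ennreal (\<bar>u w\<bar> powr p)
      \<le> (\<integral>\<^sup>+ z. ennreal (\<bar>u (fst w, snd w) - u (z, snd w)\<bar> powr p
                 / norm (fst w - z) powr (real DIM('a) + s * p)) \<partial>lborel)"
      using powr_le_nn_integral_fractional_difference[where f = "\<lambda>z. u (z, snd w)"
          and d = "real DIM('a) + s * p" and x = "fst w" and p = p, OF R _ slice_vanish] sp
      by simp
  qed
  also have "\<dots> \<le> aniso_seminorm_p s p u"
    unfolding aniso_seminorm_p_def by simp
  finally show ?thesis .
qed

lemma enn2real_powr_le_of_mult_le:
  assumes le: "ennreal c * I \<le> S" and S: "S \<noteq> \<infinity>" and c: "c > 0" and q: "q \<ge> 0"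
  shows "enn2real I powr q \<le> (1 / c) powr q * enn2real S powr q"
proof -
  have "c * enn2real I = enn2real (ennreal c * I)"
    using c by (simp add: enn2real_mult)
  also have "\<dots> \<le> enn2real S"
    using le S by (intro enn2real_mono) (auto simp: top.not_eq_extremum)
  finally have "enn2real I \<le> (1 / c) * enn2real S"
    using c by (simp add: field_simps)
  then have "enn2real I powr q \<le> ((1 / c) * enn2real S) powr q"
    using q by (intro powr_mono2) auto
  also have "\<dots> = (1 / c) powr q * enn2real S powr q"
    by (rule powr_mult)
  finally show ?thesis .
qed

theorem lemma2p6:
  fixes \<Omega> :: "('a::euclidean_space \<times> 'b::euclidean_space) set"
    and s p :: real
  assumes "bounded \<Omega>" and "open \<Omega>"
    and "0 < s" and "s < 1" and "1 < p"
  shows "\<exists>C>0. \<forall>u \<in> aniso_W_tilde s p \<Omega>.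
           Lp_norm_on p u \<Omega> \<le> C * aniso_seminorm s p u"
proof -
  obtain R where R: "R > 0" and \<Omega>R: "\<And>w. w \<in> \<Omega> \<Longrightarrow> norm w \<le> R"
    using \<open>bounded \<Omega>\<close> bounded_pos by blast
  define c where "c = far_ball_mass DIM('a) R (real DIM('a) + s * p)"
  have c: "c > 0" unfolding c_def using R by (rule far_ball_mass_pos)
  have "Lp_norm_on p u \<Omega> \<le> (1 / c) powr (1 / p) * aniso_seminorm s p u"
    if "u \<in> aniso_W_tilde s p \<Omega>" for u
  proof -
    from that have u: "u \<in> borel_measurable lborel" and S: "aniso_seminorm_p s p u \<noteq> \<infinity>"
      and zero: "\<And>w. w \<notin> \<Omega> \<Longrightarrow> u w = 0"
      unfolding aniso_W_tilde_def by auto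
    have vanish: "u w = 0" if "R < norm w" for w
      using zero \<Omega>R that by (meson not_le)
    have "(\<integral>\<^sup>+ w. ennreal (\<bar>u w\<bar> powr p) * indicator \<Omega> w \<partial>lborel) = (\<integral>\<^sup>+ w. ennreal (\<bar>u w\<bar> powr p) \<partial>lborel)"
      by (intro nn_integral_cong) (auto simp: indicator_def zero)
    then show ?thesis
      using enn2real_powr_le_of_mult_le[OF far_ball_mass_mult_Lp_le_aniso_seminorm_p[OF R _ u vanish] S]
        c \<open>0 < s\<close> \<open>1 < p\<close>
      unfolding Lp_norm_on_def aniso_seminorm_def c_def by simp
  qed
  moreover have "(1 / c) powr (1 / p) > 0" using c by simp
  ultimately show ?thesis by blast
qed

end
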